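(* Let $F$ be a 3SAT(3) formula satisfying the standing assumptions below, with variables $x_1,\dots,x_p$ and clauses $c_1,\dots,c_q$, and let $(G_s,L)$ be the temporal star constructed from $F$ as described below. Then there exists a (partial) exploration $J$ of $(G_s,L)$ of maximum size which explores all the edges $e_i,e_i',e_i''$ for $i=1,2,\dots,p$.
   Context: A temporal star $(G_s,L)$ consists of a star $G_s$ with center $c$ and a map $L$ assigning to each edge a finite set of positive integer labels (times at which the edge is available). A journey is a sequence of time edges $(u,u_1,l_1),(u_1,u_2,l_2),\dots$ (each $l_t$ a label of the edge traversed) with strictly increasing labels $l_1<l_2<\cdots$. A (partial) exploration is a journey starting and ending at $c$; an edge $\{c,v\}$ is explored if the journey enters it from $c$ to $v$ at some label and later exits it from $v$ to $c$ at a strictly larger label; the size of an exploration is the number of edges (equivalently leaves) it explores. 3SAT(3): a CNF formula with variables $x_1,\dots,x_p$ and clauses $c_1,\dots,c_q$, each clause having at most $3$ literals and each variable appearing in at most $3$ clauses. Standing assumptions on $F$: every variable occurs at least once unnegated and at least once negated; if a variable occurs three times it occurs exactly once negated and twice unnegated, and if it occurs twice it occurs once negated and once unnegated. Construction of $(G_s,L)$ from $F$: the star has the following edges. For each $i=1,\dots,p$: an edge $e_i$ with labels $50i-10,\ 50i-7,\ 50i+10,\ 50i+13$; an edge $e_i'$ with labels $50i,\ 50i+1$; an edge $e_i''$ with labels $50i+15,\ 50i+16$. For each clause $c_j$, $j=1,\dots,q$, an edge $e_{p+j}$ whose labels are: for every variable $x_i$ appearing unnegated in $c_j$ such that $c_j$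 is the first clause (in the order $c_1,\dots,c_q$) containing $x_i$ unnegated, the labels $50i-12,\ 50i-9$; for every variable $x_i$ appearing unnegated in $c_j$ such that an earlier clause already contains $x_i$ unnegated, the labels $50i-8,\ 50i-5$; for every variable $x_i$ appearing negated in $c_j$, the labels $50i+8,\ 50i+11$. *)

theory Defs
  imports Main
begin

text \<open>A literal is a pair (i, b): variable x_i, unnegated iff b = True.
  A formula with variables x_1..x_p and clauses c_1..c_q is given by
  C :: nat => (nat * bool) set, where C j is the set of literals of clause c_j.\<close>

type_synonym literal = "nat \<times> bool"

definition occ :: "nat \<Rightarrow> (nat \<Rightarrow> literal set) \<Rightarrow> literal \<Rightarrow> nat" where
  "occ q C l = card {j \<in> {1..q}. l \<in> C j}"

definition is_3sat3 :: "nat \<Rightarrow> nat \<Rightarrow> (nat \<Rightarrow> literal set) \<Rightarrow> bool" where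
  "is_3sat3 p q C \<longleftrightarrow>
     (\<forall>j \<in> {1..q}. finite (C j) \<and> card (C j) \<le> 3 \<and> (\<forall>(i, b) \<in> C j. i \<in> {1..p})) \<and>
     (\<forall>i \<in> {1..p}. card {j \<in> {1..q}. (i, True) \<in> C j \<or> (i, False) \<in> C j} \<le> 3)"

definition standing_assumptions :: "nat \<Rightarrow> nat \<Rightarrow> (nat \<Rightarrow> literal set) \<Rightarrow> bool" where
  "standing_assumptions p q C \<longleftrightarrow>
     (\<forall>i \<in> {1..p}.
        occ q C (i, True) \<ge> 1 \<and> occ q C (i, False) \<ge> 1 \<and>
        (occ q C (i, True) + occ q C (i, False) = 3 \<longrightarrow>
            occ q C (i, False) = 1 \<and> occ q C (i, True) = 2) \<and>
        (occ q C (i, True) + occ q C (i, False) = 2 \<longrightarrow>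
            occ q C (i, False) = 1 \<and> occ q C (i, True) = 1))"

text \<open>Edges of the star: E i is e_i (for i = 1..p+q; e_{p+j} is the clause edge of c_j),
  E' i is e_i', E'' i is e_i''. Each edge is identified with its leaf.\<close>

datatype sedge = E nat | E' nat | E'' nat

datatype vertex = Center | Leaf sedge

text \<open>A time edge (u, v, l): traverse from u to v at time l.\<close>
type_synonym time_edge = "vertex \<times> vertex \<times> nat"

definition is_time_edge :: "sedge set \<Rightarrow> (sedge \<Rightarrow> nat set) \<Rightarrow> time_edge \<Rightarrow> bool" where
  "is_time_edge Es L te \<longleftrightarrow> (case te of (u, v, l) \<Rightarrow>
     (\<exists>e \<in> Es. l \<in> L e \<and> ((u = Center \<and> v = Leaf e) \<or> (u = Leaf e \<and> v = Center))))"

definition is_journey :: "sedge set \<Rightarrow> (sedge \<Rightarrow> nat set) \<Rightarrow> time_edge list \<Rightarrow> bool" where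
  "is_journey Es L J \<longleftrightarrow>
     (\<forall>t < length J. is_time_edge Es L (J ! t)) \<and>
     (\<forall>t. Suc t < length J \<longrightarrow>
        fst (snd (J ! t)) = fst (J ! Suc t) \<and> snd (snd (J ! t)) < snd (snd (J ! Suc t)))"

text \<open>A (partial) exploration: a journey starting and ending at the center.
  The empty journey is admitted as the trivial exploration (of size 0).\<close>
definition is_exploration :: "sedge set \<Rightarrow> (sedge \<Rightarrow> nat set) \<Rightarrow> time_edge list \<Rightarrow> bool" where
  "is_exploration Es L J \<longleftrightarrow> is_journey Es L J \<and>
     (J \<noteq> [] \<longrightarrow> fst (hd J) = Center \<and> fst (snd (last J)) = Center)"

definition explores :: "time_edge list \<Rightarrow> sedge \<Rightarrow> bool" where
  "explores J e \<longleftrightarrow> (\<exists>a b l1 l2. a < b \<and> b < length J \<and>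
      J ! a = (Center, Leaf e, l1) \<and> J ! b = (Leaf e, Center, l2) \<and> l1 < l2)"

definition exploration_size :: "time_edge list \<Rightarrow> nat" where
  "exploration_size J = card {e. explores J e}"

definition is_max_exploration :: "sedge set \<Rightarrow> (sedge \<Rightarrow> nat set) \<Rightarrow> time_edge list \<Rightarrow> bool" where
  "is_max_exploration Es L J \<longleftrightarrow> is_exploration Es L J \<and>
     (\<forall>J'. is_exploration Es L J' \<longrightarrow> exploration_size J' \<le> exploration_size J)"

definition star_edges :: "nat \<Rightarrow> nat \<Rightarrow> sedge set" where
  "star_edges p q = E ` {1..p+q} \<union> E' ` {1..p} \<union> E'' ` {1..p}"

definition first_pos :: "nat \<Rightarrow> (nat \<Rightarrow> literal set) \<Rightarrow> nat \<Rightarrow> nat \<Rightarrow> bool" where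
  "first_pos q C i j \<longleftrightarrow> (\<forall>k \<in> {1..q}. k < j \<longrightarrow> (i, True) \<notin> C k)"

definition clause_labels :: "nat \<Rightarrow> (nat \<Rightarrow> literal set) \<Rightarrow> nat \<Rightarrow> nat set" where
  "clause_labels q C j =
     (\<Union>i \<in> {i. (i, True) \<in> C j \<and> first_pos q C i j}. {50*i - 12, 50*i - 9}) \<union>
     (\<Union>i \<in> {i. (i, True) \<in> C j \<and> \<not> first_pos q C i j}. {50*i - 8, 50*i - 5}) \<union>
     (\<Union>i \<in> {i. (i, False) \<in> C j}. {50*i + 8, 50*i + 11})"

fun star_labels :: "nat \<Rightarrow> nat \<Rightarrow> (nat \<Rightarrow> literal set) \<Rightarrow> sedge \<Rightarrow> nat set" where
  "star_labels p q C (E i) =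
     (if 1 \<le> i \<and> i \<le> p then {50*i - 10, 50*i - 7, 50*i + 10, 50*i + 13}
      else if p < i \<and> i \<le> p + q then clause_labels q C (i - p) else {})"
| "star_labels p q C (E' i) = (if 1 \<le> i \<and> i \<le> p then {50*i, 50*i + 1} else {})"
| "star_labels p q C (E'' i) = (if 1 \<le> i \<and> i \<le> p then {50*i + 15, 50*i + 16} else {})"

end

theory Submission
  imports Defs
begin

text \<open>
  The visits of an exploration of a star are pairwise disjoint time intervals, each starting and
  ending at labels of its edge; conversely any such family of visits, sorted by entry time, is an
  exploration. So it suffices to turn the visits of a maximum exploration into a family of at
  least the same size that visits every \<open>e\<^sub>i, e\<^sub>i', e\<^sub>i''\<close>.

  The labels of a clause edge come in pairs ("slots") \<open>{a, a + 3}\<close>, three possible ones per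
  variable \<open>x\<^sub>i\<close>, and no clause label lies strictly inside a slot. Hence a clause edge that enters
  at a label of a slot stays there at least until the end of the slot, and each slot is used by at
  most one clause edge. Rebuild the visits variable by variable: every clause edge is visited
  exactly on its slot, \<open>e\<^sub>i'\<close> at \<open>(50i, 50i+1)\<close>, \<open>e\<^sub>i''\<close> at \<open>(50i+15, 50i+16)\<close>, and \<open>e\<^sub>i\<close> at
  \<open>(50i+10, 50i+13)\<close> if one of the two unnegated slots of \<open>x\<^sub>i\<close> is used and at
  \<open>(50i-10, 50i-7)\<close> otherwise. Only the edge in the negated slot may be lost, and only if an
  unnegated slot is used as well; but then the original exploration cannot have visited both
  \<open>e\<^sub>i\<close> and \<open>e\<^sub>i'\<close>, so it is paid for by one of them.
\<close>

section \<open>Explorations as families of disjoint visits\<close>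

definition visit_schedule ::
    "sedge set \<Rightarrow> (sedge \<Rightarrow> nat set) \<Rightarrow> sedge set \<Rightarrow> (sedge \<Rightarrow> nat) \<Rightarrow> (sedge \<Rightarrow> nat) \<Rightarrow> bool" where
  "visit_schedule Es L S s t \<longleftrightarrow> S \<subseteq> Es \<and>
     (\<forall>e\<in>S. s e \<in> L e \<and> t e \<in> L e \<and> s e < t e) \<and>
     (\<forall>e\<in>S. \<forall>e'\<in>S. e \<noteq> e' \<longrightarrow> t e < s e' \<or> t e' < s e)"

lemma visit_schedule_subset:
  "visit_schedule Es L S s t \<Longrightarrow> S' \<subseteq> S \<Longrightarrow> visit_schedule Es L S' s t"
  unfolding visit_schedule_def by blast

lemma is_journey_Cons:
  "is_journey Es L (x # J) \<longleftrightarrow> is_time_edge Es L x \<and> is_journey Es L J \<and>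
     (J \<noteq> [] \<longrightarrow> fst (snd x) = fst (hd J) \<and> snd (snd x) < snd (snd (hd J)))"
  unfolding is_journey_def All_less_Suc2 length_Cons
  by (cases J) (auto simp: All_less_Suc2 less_Suc_eq_0_disj)

lemma journey_time_mono:
  assumes "is_journey Es L J" "a < b" "b < length J"
  shows "snd (snd (J ! a)) < snd (snd (J ! b))"
  using assms(2,3)
proof (induction b)
  case (Suc b)
  have "snd (snd (J ! b)) < snd (snd (J ! Suc b))"
    using assms(1) Suc.prems(2) unfolding is_journey_def by blast
  then show ?case
    using Suc by (cases "a = b") auto
qed simp

lemma journey_returns_from_leaf:
  assumes "is_journey Es L J" "J ! a = (Center, Leaf e, l)" "Suc a < length J"
  shows "\<exists>l'. J ! Suc a = (Leaf e, Center, l') \<and> e \<in> Es \<and> l \<in> L e \<and> l' \<in> L e \<and> l < l'"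
proof -
  obtain u v l' where next_edge: "J ! Suc a = (u, v, l')"
    by (cases "J ! Suc a") auto
  have "is_time_edge Es L (J ! a)" "is_time_edge Es L (J ! Suc a)"
    "fst (snd (J ! a)) = fst (J ! Suc a)" "snd (snd (J ! a)) < snd (snd (J ! Suc a))"
    using assms(1,3) unfolding is_journey_def by auto
  then show ?thesis
    using assms(2) next_edge unfolding is_time_edge_def by auto
qed

lemma explores_Cons: "explores J e \<Longrightarrow> explores (x # J) e"
  unfolding explores_def by (metis Suc_less_eq length_Cons nth_Cons_Suc)

lemma explores_first_visit:
  "l1 < l2 \<Longrightarrow> explores ((Center, Leaf e, l1) # (Leaf e, Center, l2) # J) e"
  unfolding explores_def by (rule exI[of _ 0], rule exI[of _ 1]) auto

lemma explored_visit_schedule: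
  assumes J: "is_journey Es L J"
  shows "\<exists>s t. visit_schedule Es L {e. explores J e} s t"
proof -
  have "\<exists>a. Suc a < length J \<and> (\<exists>l. J ! a = (Center, Leaf e, l))" if "explores J e" for e
    using that unfolding explores_def by (metis less_trans_Suc)
  then obtain a where a: "\<And>e. explores J e \<Longrightarrow> Suc (a e) < length J \<and> (\<exists>l. J ! a e = (Center, Leaf e, l))"
    by metis
  define s where "s e = snd (snd (J ! a e))" for e
  define t where "t e = snd (snd (J ! Suc (a e)))" for e
  have visit: "J ! a e = (Center, Leaf e, s e) \<and> J ! Suc (a e) = (Leaf e, Center, t e) \<and>
      e \<in> Es \<and> s e \<in> L e \<and> t e \<in> L e \<and> s e < t e" if "explores J e" for e
    using a[OF that] journey_returns_from_leaf[OF J] unfolding s_def t_def by fastforce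
  have earlier: "t e < s e'" if "explores J e" "explores J e'" "a e < a e'" for e e'
  proof -
    have "a e' \<noteq> Suc (a e)"
      using visit[OF that(1)] visit[OF that(2)] by auto
    then show ?thesis
      using journey_time_mono[OF J, of "Suc (a e)" "a e'"] that a[OF that(2)] unfolding s_def t_def by simp
  qed
  have "t e < s e' \<or> t e' < s e" if "explores J e" "explores J e'" "e \<noteq> e'" for e e'
  proof -
    have "a e \<noteq> a e'"
      using visit[OF that(1)] visit[OF that(2)] that(3) by auto
    then show ?thesis
      using earlier that by (meson linorder_neqE_nat)
  qed
  then have "visit_schedule Es L {e. explores J e} s t"
    unfolding visit_schedule_def using visit by auto
  then show ?thesis by blast
qed

lemma visit_schedule_exploration:
  assumes "finite S" "visit_schedule Es L S s t"
  shows "\<exists>J. is_exploration Es L J \<and> S \<subseteq> {e. explores J e}"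
proof -
  have "\<exists>J. is_exploration Es L J \<and> S \<subseteq> {e. explores J e} \<and> (\<forall>x\<in>set J. \<exists>e\<in>S. s e \<le> snd (snd x))"
    using assms
  proof (induction S rule: finite_remove_induct)
    case empty
    show ?case by (intro exI[of _ "[]"]) (simp add: is_exploration_def is_journey_def)
  next
    case (remove A)
    have "Min (s ` A) \<in> s ` A"
      using remove.hyps(1,2) by simp
    then obtain e0 where e0: "e0 \<in> A" "s e0 = Min (s ` A)"
      by (metis imageE)
    have first: "t e0 < s e" if "e \<in> A" "e \<noteq> e0" for e
    proof -
      have "s e0 \<le> s e"
        using e0(2) remove.hyps(1) that(1) by simp
      moreover have "t e0 < s e \<or> t e < s e0" "s e < t e"
        using remove.prems e0(1) that unfolding visit_schedule_def by blast+
      ultimately show ?thesis by linarith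
    qed
    obtain J where J: "is_exploration Es L J" "A - {e0} \<subseteq> {e. explores J e}"
        "\<forall>x\<in>set J. \<exists>e\<in>A - {e0}. s e \<le> snd (snd x)"
      using remove.IH[OF e0(1) visit_schedule_subset[OF remove.prems]] by blast
    have e0_visit: "e0 \<in> Es" "s e0 \<in> L e0" "t e0 \<in> L e0" "s e0 < t e0"
      using remove.prems e0(1) unfolding visit_schedule_def by auto
    have "t e0 < snd (snd (hd J))" if nonempty: "J \<noteq> []"
    proof -
      obtain e where "e \<in> A - {e0}" "s e \<le> snd (snd (hd J))"
        using J(3) hd_in_set[OF nonempty] by blast
      then show ?thesis
        using first by fastforce
    qed
    then have "is_exploration Es L ((Center, Leaf e0, s e0) # (Leaf e0, Center, t e0) # J)"
      using J(1) e0_visit unfolding is_exploration_def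
      by (auto simp: is_journey_Cons is_time_edge_def)
    moreover have "A \<subseteq> {e. explores ((Center, Leaf e0, s e0) # (Leaf e0, Center, t e0) # J) e}"
    proof -
      show ?thesis
        using J(2) explores_first_visit[OF e0_visit(4), of e0 J] by (auto intro: explores_Cons)
    qed
    moreover have "\<forall>x\<in>set ((Center, Leaf e0, s e0) # (Leaf e0, Center, t e0) # J). \<exists>e\<in>A. s e \<le> snd (snd x)"
      using J(3) e0(1) e0_visit(4) by force
    ultimately show ?case by blast
  qed
  then show ?thesis by blast
qed

lemma max_exploration_exploring:
  assumes "finite Es"
    and exchange: "\<And>S s t. visit_schedule Es L S s t \<Longrightarrow>
      \<exists>S' s' t'. visit_schedule Es L S' s' t' \<and> card S \<le> card S' \<and> A \<subseteq> S'"
  shows "\<exists>J. is_max_exploration Es L J \<and> A \<subseteq> {e. explores J e}"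
proof -
  have explored_subset: "{e. explores J e} \<subseteq> Es" if "is_exploration Es L J" for J
    using explored_visit_schedule[of Es L J] that unfolding is_exploration_def visit_schedule_def by blast
  have "exploration_size J < Suc (card Es)" if "is_exploration Es L J" for J
    using card_mono[OF assms(1) explored_subset[OF that]] unfolding exploration_size_def by simp
  moreover have "is_exploration Es L []"
    by (simp add: is_exploration_def is_journey_def)
  ultimately obtain J0 where J0: "is_exploration Es L J0"
      "\<And>J. is_exploration Es L J \<Longrightarrow> exploration_size J \<le> exploration_size J0"
    using ex_has_greatest_nat[of "is_exploration Es L" "[]" exploration_size] by metis
  obtain s t where "visit_schedule Es L {e. explores J0 e} s t"
    using explored_visit_schedule J0(1) unfolding is_exploration_def by blast
  then obtain S' s' t' where S': "visit_schedule Es L S' s' t'"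
      "exploration_size J0 \<le> card S'" "A \<subseteq> S'"
    using exchange unfolding exploration_size_def by blast
  have "finite S'"
    using S'(1) assms(1) finite_subset unfolding visit_schedule_def by blast
  then obtain J where J: "is_exploration Es L J" "S' \<subseteq> {e. explores J e}"
    using visit_schedule_exploration S'(1) by blast
  have "card S' \<le> exploration_size J"
    unfolding exploration_size_def
    using card_mono[OF finite_subset[OF explored_subset[OF J(1)] assms(1)] J(2)] .
  then have "is_max_exploration Es L J"
    unfolding is_max_exploration_def using J(1) J0(2) S'(2) by fastforce
  then show ?thesis
    using J(2) S'(3) by blast
qed

section \<open>Label slots of the construction\<close>

lemma finite_star_edges: "finite (star_edges p q)"
  unfolding star_edges_def by simp

definition variable_edges :: "nat \<Rightarrow> sedge set" where
  "variable_edges p = (\<Union>i\<in>{1..p}. {E i, E' i, E'' i})"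

lemma star_edges_cases:
  assumes "e \<in> star_edges p q"
  obtains (variable) i where "i \<in> {1..p}" "e \<in> {E i, E' i, E'' i}"
    | (clause) j where "j \<in> {1..q}" "e = E (p + j)"
proof -
  consider (variable) i where "i \<in> {1..p}" "e \<in> {E i, E' i, E'' i}" | (clause) k where "k \<in> {p<..p+q}" "e = E k"
    using assms unfolding star_edges_def by fastforce
  then show ?thesis
  proof cases
    case (clause k)
    show ?thesis
      by (rule that(2)[of "k - p"]) (use clause in auto)
  qed (use that(1) in blast)
qed

text \<open>
  A clause edge receives the labels \<open>slot First_Pos i\<close>, \<open>slot Later_Pos i\<close> or \<open>slot Neg i\<close> for an
  unnegated first, an unnegated later, or a negated occurrence of \<open>x\<^sub>i\<close>.
\<close>

datatype slot_kind = First_Pos | Later_Pos | Neg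

fun slot_start :: "slot_kind \<Rightarrow> nat \<Rightarrow> nat" where
  "slot_start First_Pos i = 50 * i - 12"
| "slot_start Later_Pos i = 50 * i - 8"
| "slot_start Neg i = 50 * i + 8"

definition slot :: "slot_kind \<Rightarrow> nat \<Rightarrow> nat set" where
  "slot k i = {slot_start k i, slot_start k i + 3}"

definition window :: "nat \<Rightarrow> nat set" where
  "window i = {50 * i - 12 .. 50 * i + 16}"

definition window_index :: "nat \<Rightarrow> nat" where
  "window_index x = (x + 12) div 50"

lemma window_index_eq: "1 \<le> i \<Longrightarrow> x \<in> window i \<Longrightarrow> window_index x = i"
  unfolding window_def window_index_def by (intro div_nat_eqI) auto

lemma window_unique: "1 \<le> i \<Longrightarrow> 1 \<le> i' \<Longrightarrow> x \<in> window i \<Longrightarrow> x \<in> window i' \<Longrightarrow> i = i'"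
  using window_index_eq by metis

lemma windows_apart:
  assumes "1 \<le> i" "1 \<le> i'" "i \<noteq> i'" "{a, b} \<subseteq> window i" "{a', b'} \<subseteq> window i'"
  shows "b < a' \<or> b' < a"
proof (cases "i < i'")
  case True
  then have "50 * i + 50 \<le> 50 * i'" by simp
  then show ?thesis using assms(4,5) unfolding window_def by auto
next
  case False
  then have "50 * i' + 50 \<le> 50 * i" using assms(3) by simp
  then show ?thesis using assms(4,5) unfolding window_def by auto
qed

lemma slot_subset_window: "1 \<le> i \<Longrightarrow> slot k i \<subseteq> window i"
  unfolding slot_def window_def by (cases k) auto

lemma slot_unique:
  assumes "x \<in> slot k i" "x \<in> slot k' i'" "1 \<le> i" "1 \<le> i'"
  shows "k = k' \<and> i = i'"
proof -
  have "i = i'"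
    using assms window_unique slot_subset_window by blast
  then show ?thesis
    using assms(1,2,3) unfolding slot_def by (cases k; cases k') auto
qed

lemma slot_gap:
  assumes "x \<in> slot k' i'" "1 \<le> i" "1 \<le> i'" "slot_start k i < x"
  shows "slot_start k i + 3 \<le> x"
proof (rule ccontr)
  assume early: "\<not> ?thesis"
  then have "x \<in> window i"
    using assms(2,4) unfolding window_def by (cases k) auto
  then have "i' = i"
    using assms(1-3) window_unique slot_subset_window by blast
  then show False
    using assms(1,2,4) early unfolding slot_def by (cases k; cases k') auto
qed

lemma slot_gap_before_Neg:
  assumes "x \<in> slot k' i'" "1 \<le> i" "1 \<le> i'" "slot_start Later_Pos i + 3 < x"
  shows "slot_start Neg i \<le> x"
proof (rule ccontr)
  assume early: "\<not> ?thesis"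
  then have "x \<in> window i"
    using assms(2,4) unfolding window_def by auto
  then have "i' = i"
    using assms(1-3) window_unique slot_subset_window by blast
  then show False
    using assms(1,2,4) early unfolding slot_def by (cases k') auto
qed

lemma variable_labels_window:
  "i \<in> {1..p} \<Longrightarrow> e \<in> {E i, E' i, E'' i} \<Longrightarrow> star_labels p q C e \<subseteq> window i"
  unfolding window_def by auto

lemma variable_label_not_in_slot:
  assumes "i \<in> {1..p}" "e \<in> {E i, E' i, E'' i}" "x \<in> star_labels p q C e" "1 \<le> i'"
  shows "x \<notin> slot k i'"
proof
  assume x: "x \<in> slot k i'"
  then have "i' = i"
    using assms variable_labels_window slot_subset_window window_unique by (metis atLeastAtMost_iff subsetD)
  then show False
    using assms x unfolding slot_def by (cases k) auto
qed

lemma clause_labels_slot: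
  assumes "is_3sat3 p q C" "j \<in> {1..q}" "x \<in> clause_labels q C j"
  shows "\<exists>k i. i \<in> {1..p} \<and> x \<in> slot k i \<and> slot k i \<subseteq> clause_labels q C j"
proof -
  have var: "i \<in> {1..p}" if "(i, b) \<in> C j" for i b
    using assms(1,2) that unfolding is_3sat3_def by blast
  from assms(3) consider
      (first) i where "(i, True) \<in> C j" "first_pos q C i j" "x \<in> {50 * i - 12, 50 * i - 9}"
    | (later) i where "(i, True) \<in> C j" "\<not> first_pos q C i j" "x \<in> {50 * i - 8, 50 * i - 5}"
    | (neg) i where "(i, False) \<in> C j" "x \<in> {50 * i + 8, 50 * i + 11}"
    unfolding clause_labels_def by blast
  moreover have slots: "slot First_Pos i = {50 * i - 12, 50 * i - 9}"
      "slot Later_Pos i = {50 * i - 8, 50 * i - 5}" "slot Neg i = {50 * i + 8, 50 * i + 11}"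
    if "i \<in> {1..p}" for i
    using that by (auto simp: slot_def)
  ultimately show ?thesis
  proof cases
    case first
    with var slots(1)[of i] show ?thesis
      unfolding clause_labels_def by blast
  next
    case later
    with var slots(2)[of i] show ?thesis
      unfolding clause_labels_def by blast
  next
    case neg
    with var slots(3)[of i] show ?thesis
      unfolding clause_labels_def by blast
  qed
qed

section \<open>Rearranging the visits of an exploration\<close>

locale star_schedule =
  fixes p q :: nat and C :: "nat \<Rightarrow> literal set"
    and S :: "sedge set" and s t :: "sedge \<Rightarrow> nat"
  assumes sat: "is_3sat3 p q C"
    and schedule: "visit_schedule (star_edges p q) (star_labels p q C) S s t"
begin

abbreviation L :: "sedge \<Rightarrow> nat set" where
  "L \<equiv> star_labels p q C"

lemma scheduled_visit: "e \<in> S \<Longrightarrow> e \<in> star_edges p q \<and> s e \<in> L e \<and> t e \<in> L e \<and> s e < t e"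
  using schedule unfolding visit_schedule_def by blast

lemma visits_disjoint: "e \<in> S \<Longrightarrow> e' \<in> S \<Longrightarrow> e \<noteq> e' \<Longrightarrow> t e < s e' \<or> t e' < s e"
  using schedule unfolding visit_schedule_def by blast

definition occupies :: "sedge \<Rightarrow> slot_kind \<Rightarrow> nat \<Rightarrow> bool" where
  "occupies e k i \<longleftrightarrow> e \<in> S \<and> 1 \<le> i \<and> s e \<in> slot k i"

lemma occupant_is_clause_edge:
  assumes "occupies e k i"
  obtains j where "j \<in> {1..q}" "e = E (p + j)"
  using scheduled_visit[of e] assms unfolding occupies_def
  by (metis star_edges_cases variable_label_not_in_slot)

lemma clause_edge_occupies:
  assumes "e \<in> S" "j \<in> {1..q}" "e = E (p + j)"
  obtains k i where "occupies e k i"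
  using clause_labels_slot[OF sat assms(2)] scheduled_visit[OF assms(1)] assms unfolding occupies_def
  by fastforce

lemma occupied_slot_labels:
  assumes "occupies e k i"
  shows "i \<le> p \<and> slot k i \<subseteq> L e"
proof -
  obtain j where j: "j \<in> {1..q}" "e = E (p + j)"
    using occupant_is_clause_edge[OF assms] .
  then have labels: "L e = clause_labels q C j"
    by simp
  obtain k' i' where "i' \<in> {1..p}" "s e \<in> slot k' i'" "slot k' i' \<subseteq> clause_labels q C j"
    using clause_labels_slot[OF sat j(1)] scheduled_visit assms labels unfolding occupies_def by metis
  moreover have "k' = k \<and> i' = i"
    using slot_unique assms calculation(1,2) unfolding occupies_def by auto
  ultimately show ?thesis
    using labels by auto
qed

lemma exit_in_slot:
  assumes "occupies e k i"
  shows "\<exists>k' i'. 1 \<le> i' \<and> t e \<in> slot k' i'"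
proof -
  obtain j where j: "j \<in> {1..q}" "e = E (p + j)"
    using occupant_is_clause_edge[OF assms] .
  have "t e \<in> clause_labels q C j"
    using scheduled_visit[of e] assms j unfolding occupies_def by auto
  then obtain k' i' where "i' \<in> {1..p}" "t e \<in> slot k' i'"
    using clause_labels_slot[OF sat j(1)] by blast
  then show ?thesis
    by auto
qed

lemma exit_after_slot:
  assumes "occupies e k i"
  shows "slot_start k i + 3 \<le> t e"
proof -
  obtain k' i' where "1 \<le> i'" "t e \<in> slot k' i'"
    using exit_in_slot[OF assms] by blast
  moreover have "slot_start k i < t e"
    using assms scheduled_visit[of e] unfolding occupies_def slot_def by auto
  ultimately show ?thesis
    using slot_gap assms unfolding occupies_def by simp
qed

lemma occupant_unique:
  assumes "occupies e k i" "occupies e' k i"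
  shows "e = e'"
proof (rule ccontr)
  assume "e \<noteq> e'"
  then have "t e < s e' \<or> t e' < s e"
    using visits_disjoint assms unfolding occupies_def by blast
  moreover have "s e \<le> slot_start k i + 3" "s e' \<le> slot_start k i + 3"
    using assms unfolding occupies_def slot_def by auto
  ultimately show False
    using exit_after_slot[OF assms(1)] exit_after_slot[OF assms(2)] by linarith
qed

lemma occupant_not_variable_edge:
  assumes "occupies e k i" "i' \<le> p"
  shows "e \<notin> {E i', E' i', E'' i'}"
proof -
  obtain j where "j \<in> {1..q}" "e = E (p + j)"
    using occupant_is_clause_edge[OF assms(1)] .
  then show ?thesis
    using assms(2) by auto
qed

text \<open>
  A visit of \<open>e\<^sub>i\<close> before \<open>e\<^sub>i'\<close> collides with the clause edge in an unnegated slot, one after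
  \<open>e\<^sub>i'\<close> with the clause edge in the negated slot.
\<close>

lemma gadget_conflict:
  assumes "occupies d k i" "k \<noteq> Neg" "occupies e Neg i" "E i \<in> S" "E' i \<in> S"
  shows False
proof -
  have i: "1 \<le> i" "i \<le> p"
    using assms(1) occupied_slot_labels unfolding occupies_def by auto
  have distinct: "d \<noteq> E i" "d \<noteq> E' i" "e \<noteq> E i"
    using occupant_not_variable_edge assms(1,3) i(2) by blast+
  have E': "s (E' i) = 50 * i" "t (E' i) = 50 * i + 1"
    using scheduled_visit[OF assms(5)] i by auto
  have E: "s (E i) \<in> {50 * i - 10, 50 * i - 7, 50 * i + 10, 50 * i + 13}"
      "t (E i) \<in> {50 * i - 10, 50 * i - 7, 50 * i + 10, 50 * i + 13}" "s (E i) < t (E i)"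
    using scheduled_visit[OF assms(4)] i by auto
  consider (before) "t (E i) < s (E' i)" | (after) "t (E' i) < s (E i)"
    using visits_disjoint[OF assms(4,5)] by blast
  then show False
  proof cases
    case before
    then have Ei: "s (E i) = 50 * i - 10" "t (E i) = 50 * i - 7"
      using E E' i(1) by auto
    have d_entry: "s d \<in> {50 * i - 12, 50 * i - 9, 50 * i - 8, 50 * i - 5}"
      using assms(1,2) i(1) by (cases k) (auto simp: occupies_def slot_def)
    have "t (E i) < s d \<or> t d < s (E i)" "t (E' i) < s d \<or> t d < s (E' i)"
      using visits_disjoint assms(1,4,5) distinct unfolding occupies_def by blast+
    moreover have "50 * i - 9 \<le> t d"
      using exit_after_slot[OF assms(1)] assms(2) i(1) by (cases k) auto
    ultimately have "t (E i) < s d"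
      using Ei i(1) by auto
    then have "s d = 50 * i - 5"
      using d_entry Ei i(1) by auto
    moreover have "s d < t d"
      using scheduled_visit assms(1) unfolding occupies_def by blast
    moreover obtain k' i' where "1 \<le> i'" "t d \<in> slot k' i'"
      using exit_in_slot[OF assms(1)] by blast
    ultimately have "50 * i + 8 \<le> t d"
      using slot_gap_before_Neg[of "t d" k' i' i] i(1) by simp
    then show False
      using \<open>t (E' i) < s d \<or> t d < s (E' i)\<close> \<open>s d = 50 * i - 5\<close> E' by linarith
  next
    case after
    then have Ei: "s (E i) = 50 * i + 10" "t (E i) = 50 * i + 13"
      using E E' i(1) by auto
    have "s e \<in> {50 * i + 8, 50 * i + 11}" "50 * i + 11 \<le> t e"
      using assms(3) exit_after_slot[OF assms(3)] unfolding occupies_def slot_def by auto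
    moreover have "t (E i) < s e \<or> t e < s (E i)"
      using visits_disjoint assms(3,4) distinct unfolding occupies_def by blast
    ultimately show False
      using Ei by auto
  qed
qed

definition pos_slot_used :: "nat \<Rightarrow> bool" where
  "pos_slot_used i \<longleftrightarrow> (\<exists>e k. k \<noteq> Neg \<and> occupies e k i)"

definition block :: "nat \<Rightarrow> sedge set" where
  "block i = {E i, E' i, E'' i} \<union> {e. \<exists>k. occupies e k i \<and> (k = Neg \<longrightarrow> \<not> pos_slot_used i)}"

definition new_edges :: "sedge set" where
  "new_edges = (\<Union>i\<in>{1..p}. block i)"

text \<open>For a clause edge \<open>E (p + j)\<close>, the new visit covers the slot its old visit entered.\<close>

definition new_entry :: "sedge \<Rightarrow> nat" where
  "new_entry e = (case e of
      E i \<Rightarrow> if i \<le> p then (if pos_slot_used i then 50 * i + 10 else 50 * i - 10)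
             else (SOME a. \<exists>k i'. occupies e k i' \<and> a = slot_start k i')
    | E' i \<Rightarrow> 50 * i
    | E'' i \<Rightarrow> 50 * i + 15)"

definition new_exit :: "sedge \<Rightarrow> nat" where
  "new_exit e = (case e of E _ \<Rightarrow> new_entry e + 3 | _ \<Rightarrow> new_entry e + 1)"

lemma new_visit_occupant:
  assumes "occupies e k i"
  shows "new_entry e = slot_start k i" "new_exit e = slot_start k i + 3"
proof -
  obtain j where j: "j \<in> {1..q}" "e = E (p + j)"
    using occupant_is_clause_edge[OF assms] .
  have "(\<lambda>a. \<exists>k' i'. occupies e k' i' \<and> a = slot_start k' i') = (\<lambda>a. a = slot_start k i)"
    using assms slot_unique unfolding occupies_def by blast
  then show "new_entry e = slot_start k i"
    using j unfolding new_entry_def by simp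
  then show "new_exit e = slot_start k i + 3"
    using j unfolding new_exit_def by simp
qed

lemma block_visit:
  assumes "i \<in> {1..p}" "e \<in> block i"
  shows "new_entry e \<in> L e \<and> new_exit e \<in> L e \<and> new_entry e < new_exit e \<and>
    {new_entry e, new_exit e} \<subseteq> window i"
proof (cases "e \<in> {E i, E' i, E'' i}")
  case True
  then show ?thesis
    using assms(1) unfolding new_entry_def new_exit_def window_def by auto
next
  case False
  then obtain k where k: "occupies e k i"
    using assms(2) unfolding block_def by blast
  then have "slot k i \<subseteq> L e" "slot k i \<subseteq> window i"
    using occupied_slot_labels slot_subset_window assms(1) by auto
  then show ?thesis
    using new_visit_occupant[OF k] unfolding slot_def by auto
qed

lemma variable_occupant_disjoint:
  assumes "i \<in> {1..p}" "e \<in> {E i, E' i, E'' i}" "occupies e' k i" "k = Neg \<longrightarrow> \<not> pos_slot_used i"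
  shows "new_exit e < new_entry e' \<or> new_exit e' < new_entry e"
proof -
  have "k \<noteq> Neg \<Longrightarrow> pos_slot_used i"
    using assms(3) unfolding pos_slot_used_def by blast
  then show ?thesis
    using assms new_visit_occupant[OF assms(3)] unfolding new_entry_def new_exit_def
    by (cases k) auto
qed

lemma occupants_disjoint:
  assumes "occupies e k i" "occupies e' k' i" "e \<noteq> e'"
  shows "new_exit e < new_entry e' \<or> new_exit e' < new_entry e"
proof -
  have "k \<noteq> k'"
    using occupant_unique assms by blast
  then show ?thesis
    using assms(1) new_visit_occupant[OF assms(1)] new_visit_occupant[OF assms(2)]
    unfolding occupies_def by (cases k; cases k') auto
qed

lemma block_disjoint:
  assumes "i \<in> {1..p}" "e \<in> block i" "e' \<in> block i" "e \<noteq> e'"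
  shows "new_exit e < new_entry e' \<or> new_exit e' < new_entry e"
proof -
  have occupant: "\<exists>k. occupies x k i \<and> (k = Neg \<longrightarrow> \<not> pos_slot_used i)"
    if "x \<in> block i" "x \<notin> {E i, E' i, E'' i}" for x
    using that unfolding block_def by blast
  show ?thesis
  proof (cases "e \<in> {E i, E' i, E'' i}"; cases "e' \<in> {E i, E' i, E'' i}")
    assume "e \<in> {E i, E' i, E'' i}" "e' \<in> {E i, E' i, E'' i}"
    then show ?thesis
      using assms(1,4) unfolding new_entry_def new_exit_def by (cases "pos_slot_used i") auto
  next
    assume "e \<in> {E i, E' i, E'' i}" "e' \<notin> {E i, E' i, E'' i}"
    then show ?thesis
      using variable_occupant_disjoint assms(1) occupant assms(3) by blast
  next
    assume "e \<notin> {E i, E' i, E'' i}" "e' \<in> {E i, E' i, E'' i}"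
    then show ?thesis
      using variable_occupant_disjoint assms(1) occupant assms(2) by blast
  next
    assume "e \<notin> {E i, E' i, E'' i}" "e' \<notin> {E i, E' i, E'' i}"
    then show ?thesis
      using occupants_disjoint occupant assms(2-4) by blast
  qed
qed

lemma new_visit_schedule: "visit_schedule (star_edges p q) L new_edges new_entry new_exit"
proof -
  have "new_edges \<subseteq> star_edges p q"
    using scheduled_visit unfolding new_edges_def block_def occupies_def star_edges_def by fastforce
  moreover have "new_exit e < new_entry e' \<or> new_exit e' < new_entry e"
    if new: "e \<in> new_edges" "e' \<in> new_edges" and "e \<noteq> e'" for e e'
  proof -
    obtain i i' where "i \<in> {1..p}" "e \<in> block i" "i' \<in> {1..p}" "e' \<in> block i'"
      using new unfolding new_edges_def by blast
    then show ?thesis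
      using block_disjoint[of i e e'] block_visit windows_apart[of i i'] \<open>e \<noteq> e'\<close>
      by (cases "i = i'") auto
  qed
  ultimately show ?thesis
    using block_visit unfolding visit_schedule_def new_edges_def by blast
qed

lemma dropped_edge:
  assumes "e \<in> S" "e \<notin> new_edges"
  obtains i where "i \<in> {1..p}" "occupies e Neg i" "pos_slot_used i"
proof -
  have "e \<in> star_edges p q"
    using scheduled_visit assms(1) by blast
  then show ?thesis
  proof (cases rule: star_edges_cases)
    case (variable i)
    then show ?thesis
      using assms(2) unfolding new_edges_def block_def by blast
  next
    case (clause j)
    then obtain k i where k: "occupies e k i"
      using clause_edge_occupies assms(1) by blast
    then have "i \<in> {1..p}"
      using occupied_slot_labels unfolding occupies_def by auto
    moreover have "k = Neg \<and> pos_slot_used i"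
      using k calculation assms(2) unfolding new_edges_def block_def by blast
    ultimately show ?thesis
      using that k by blast
  qed
qed

lemma card_le_new_edges: "card S \<le> card new_edges"
proof -
  \<comment> \<open>A lost clause edge in the negated slot of \<open>x\<^sub>i\<close> is charged to \<open>e\<^sub>i\<close> or \<open>e\<^sub>i'\<close>,
    whichever the old visits miss.\<close>
  define f where "f e = (if e \<in> new_edges then e
      else if E' (window_index (s e)) \<in> S then E (window_index (s e)) else E' (window_index (s e)))" for e
  have gadget_in_new: "{E i, E' i, E'' i} \<subseteq> new_edges" if "i \<in> {1..p}" for i
    using that unfolding new_edges_def block_def by blast
  have dropped: "\<exists>i\<in>{1..p}. f e \<in> {E i, E' i} - S \<and> occupies e Neg i"
    if removed: "e \<in> S" "e \<notin> new_edges" for e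
  proof -
    obtain i where i: "i \<in> {1..p}" "occupies e Neg i" "pos_slot_used i"
      using dropped_edge[OF removed] by blast
    then have "window_index (s e) = i"
      using window_index_eq slot_subset_window unfolding occupies_def by blast
    moreover have "\<not> (E i \<in> S \<and> E' i \<in> S)"
      using gadget_conflict i(2,3) unfolding pos_slot_used_def by blast
    ultimately show ?thesis
      using i removed(2) unfolding f_def by auto
  qed
  have "f ` S \<subseteq> new_edges"
  proof
    fix x assume "x \<in> f ` S"
    then obtain e where "e \<in> S" "x = f e" by blast
    then show "x \<in> new_edges"
      using dropped[of e] gadget_in_new unfolding f_def by (cases "e \<in> new_edges") auto
  qed
  moreover have "inj_on f S"
  proof
    fix e e' assume e: "e \<in> S" and e': "e' \<in> S" and same: "f e = f e'"
    consider "e \<in> new_edges" "e' \<in> new_edges" | "e \<notin> new_edges" "e' \<notin> new_edges"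
      | "e \<in> new_edges \<longleftrightarrow> e' \<notin> new_edges" by blast
    then show "e = e'"
    proof cases
      case 1
      then show ?thesis using same unfolding f_def by simp
    next
      case 2
      then obtain i i' where "f e \<in> {E i, E' i}" "occupies e Neg i" "f e' \<in> {E i', E' i'}" "occupies e' Neg i'"
        using dropped e e' by blast
      then show ?thesis
        using same occupant_unique by auto
    next
      case 3
      then show ?thesis
        using dropped[OF e] dropped[OF e'] e e' same unfolding f_def by auto
    qed
  qed
  moreover have "finite new_edges"
    using new_visit_schedule finite_star_edges finite_subset unfolding visit_schedule_def by blast
  ultimately show ?thesis
    using card_inj_on_le by blast
qed

lemma exchange:
  "\<exists>S' s' t'. visit_schedule (star_edges p q) L S' s' t' \<and> card S \<le> card S' \<and> variable_edges p \<subseteq> S'"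
proof -
  have "variable_edges p \<subseteq> new_edges"
    unfolding variable_edges_def new_edges_def block_def by blast
  then show ?thesis
    using new_visit_schedule card_le_new_edges by blast
qed

end

theorem lemma1:
  fixes p q :: nat and C :: "nat \<Rightarrow> literal set"
  assumes "is_3sat3 p q C"
    and "standing_assumptions p q C"
  shows "\<exists>J. is_max_exploration (star_edges p q) (star_labels p q C) J \<and>
           (\<forall>i \<in> {1..p}. explores J (E i) \<and> explores J (E' i) \<and> explores J (E'' i))"
proof -
  obtain J where "is_max_exploration (star_edges p q) (star_labels p q C) J"
      "variable_edges p \<subseteq> {e. explores J e}"
    using max_exploration_exploring[OF finite_star_edges]
      star_schedule.exchange[OF star_schedule.intro[OF assms(1)]] by blast
  then show ?thesis
    unfolding variable_edges_def by blast
qed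

end
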